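(* Assume Assumption A. Let $(\sigma_i)_{i\in\mathbb{N}}$ be i.i.d. copies of $\sigma_0$ and $i_x:=\min\{i:\sigma_i>x\}$. Then there exists $c>0$ such that for all sufficiently large $x$, \[ \mathbf{E}\big[\sigma_{i_x}^{-1}\big]<c\,x^{-1}g(x). \]
   Context: $\sigma_0$ is a strictly positive random variable under $\mathbf{P}$ and $L(u):=1/\mathbf{P}(\sigma_0>u)$ satisfies $\lim_{u\to\infty}L(uv)/L(u)=1$ for all $v>0$. Assumption A: $L$ is continuous, and there exist functions $g,k$ with $g(u)\to0$ as $u\to\infty$, $g$ eventually monotone decreasing, such that $\lim_{u\to\infty}\big(L(uv)/L(u)-1\big)/g(u)=k(v)$ for every $v>0$, where there exists $v$ with $k(v)\neq0$ and $k(uv)\ne k(u)$ for all $u>0$. *)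

theory Defs
  imports "HOL-Probability.Probability"
begin

definition tailL :: "'a measure \<Rightarrow> ('a \<Rightarrow> real) \<Rightarrow> real \<Rightarrow> real" where
  "tailL M X u = 1 / measure M {\<omega> \<in> space M. X \<omega> > u}"

definition first_exceed :: "(nat \<Rightarrow> 'a \<Rightarrow> real) \<Rightarrow> real \<Rightarrow> 'a \<Rightarrow> nat" where
  "first_exceed \<sigma> x \<omega> = (LEAST i. \<sigma> i \<omega> > x)"

end

theory Submission
  imports Defs
begin

text \<open>Write \<open>p u\<close> for the tail probability \<open>P(\<sigma>\<^sub>0 > u) = 1 / L u\<close>. The second-order
  condition at \<open>v = 2\<close> gives \<open>p (2 u) \<ge> p u (1 - K g u)\<close> for large \<open>u\<close>; iterating with \<open>g\<close>
  eventually decreasing and using Bernoulli's inequality, \<open>p (x 2\<^sup>m) \<ge> p x (1 - m K g x)\<close>.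
  Since \<open>\<sigma> (i x)\<close> is \<open>\<sigma>\<^sub>0\<close> conditioned on \<open>\<sigma>\<^sub>0 > x\<close>, this says
  \<open>P(\<sigma> (i x) \<le> x 2\<^sup>n\<^sup>+\<^sup>1) \<le> (n + 1) K g x\<close>, and summing \<open>1 / (x 2\<^sup>n)\<close> times these
  probabilities over the dyadic blocks \<open>(x 2\<^sup>n, x 2\<^sup>n\<^sup>+\<^sup>1]\<close> bounds the expectation by
  \<open>4 K g x / x\<close>.\<close>

definition tail_prob :: "'a measure \<Rightarrow> ('a \<Rightarrow> real) \<Rightarrow> real \<Rightarrow> real" where
  "tail_prob M X u = measure M {\<omega> \<in> space M. X \<omega> > u}"

lemma tailL_eq_inverse_tail_prob: "tailL M X u = 1 / tail_prob M X u"
  unfolding tailL_def tail_prob_def ..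

lemma tail_prob_antimono:
  assumes "finite_measure M" "X \<in> borel_measurable M" "u \<le> w"
  shows "tail_prob M X w \<le> tail_prob M X u"
  unfolding tail_prob_def using assms by (intro finite_measure.finite_measure_mono) auto

lemma tail_prob_pos_of_tailL_ratio_tendsto:
  assumes "finite_measure M" "X \<in> borel_measurable M"
    and ratio: "((\<lambda>u. tailL M X (u * v) / tailL M X u) \<longlongrightarrow> 1) at_top"
  shows "tail_prob M X u > 0"
proof (rule ccontr)
  assume "\<not> tail_prob M X u > 0"
  then have "tail_prob M X w = 0" if "u \<le> w" for w
    using tail_prob_antimono[OF assms(1,2) that] unfolding tail_prob_def
    by (metis measure_nonneg not_less order.antisym)
  \<comment> \<open>beyond \<open>u\<close> the ratio is \<open>x / 0 = 0\<close>\<close>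
  then have "\<forall>\<^sub>F w in at_top. tailL M X (w * v) / tailL M X w = 0"
    by (auto simp: tailL_eq_inverse_tail_prob eventually_at_top_linorder)
  from tendsto_cong[OF this] ratio have "((\<lambda>_ :: real. 0 :: real) \<longlongrightarrow> 1) at_top" by simp
  then show False by (simp add: tendsto_const_iff[OF trivial_limit_at_top_linorder])
qed

lemma eventually_gt_0_of_quotient_tendsto:
  fixes f g :: "real \<Rightarrow> real"
  assumes g_lim: "(g \<longlongrightarrow> 0) at_top"
    and g_mono: "\<exists>u0. \<forall>x y. u0 \<le> x \<longrightarrow> x \<le> y \<longrightarrow> g y \<le> g x"
    and quot: "((\<lambda>u. f u / g u) \<longlongrightarrow> c) at_top" and "c \<noteq> 0"
  shows "\<forall>\<^sub>F u in at_top. g u > 0"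
proof -
  obtain u0 where u0: "\<And>x y. u0 \<le> x \<Longrightarrow> x \<le> y \<Longrightarrow> g y \<le> g x" using g_mono by blast
  have g_nonneg: "0 \<le> g u" if "u0 \<le> u" for u
    using g_lim by (rule tendsto_upperbound) (use u0[OF that] in \<open>auto simp: eventually_at_top_linorder\<close>)
  have g_nonzero: "g u \<noteq> 0" if "u0 \<le> u" for u
  proof
    assume "g u = 0"
    then have "g w = 0" if "u \<le> w" for w
      using u0[OF \<open>u0 \<le> u\<close> that] g_nonneg[of w] \<open>u0 \<le> u\<close> that by simp
    then have "\<forall>\<^sub>F w in at_top. f w / g w = 0" by (auto simp: eventually_at_top_linorder)
    from tendsto_cong[OF this] quot have "((\<lambda>_ :: real. 0 :: real) \<longlongrightarrow> c) at_top" by simp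
    with \<open>c \<noteq> 0\<close> show False by (simp add: tendsto_const_iff[OF trivial_limit_at_top_linorder])
  qed
  show ?thesis
    unfolding eventually_at_top_linorder using g_nonneg g_nonzero by (auto simp: less_le)
qed

lemma eventually_doubling_lower_bound:
  fixes P g :: "real \<Rightarrow> real"
  assumes quot: "((\<lambda>u. (P u / P (u * 2) - 1) / g u) \<longlongrightarrow> k) at_top"
    and g_pos: "\<forall>\<^sub>F u in at_top. g u > 0" and P_pos: "\<And>u. P u > 0"
  shows "\<forall>\<^sub>F u in at_top. P u * (1 - (\<bar>k\<bar> + 1) * g u) \<le> P (u * 2)"
  using order_tendstoD(2)[OF quot le_less_trans[OF abs_ge_self less_add_one]] g_pos
proof eventually_elim
  case (elim u)
  define b where "b = (\<bar>k\<bar> + 1) * g u"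
  have "b > 0" using elim(2) by (simp add: b_def add_pos_nonneg)
  have "P u / P (u * 2) - 1 < b"
    using elim by (simp add: b_def pos_divide_less_eq mult.commute)
  then have "P u < P (u * 2) * (1 + b)" using P_pos[of "u * 2"] by (simp add: divide_less_eq algebra_simps)
  moreover have "P u * (1 - b) * (1 + b) \<le> P u"
    using P_pos[of u] \<open>b > 0\<close> by (simp add: algebra_simps)
  ultimately have "P u * (1 - b) * (1 + b) \<le> P (u * 2) * (1 + b)" by linarith
  with \<open>b > 0\<close> show ?case by (simp add: b_def)
qed

lemma dyadic_lower_bound_of_doubling_step:
  fixes P a :: "real \<Rightarrow> real"
  assumes "0 \<le> x"
    and step: "\<And>u. x \<le> u \<Longrightarrow> P u * (1 - a u) \<le> P (u * 2)"
    and a_mono: "\<And>u. x \<le> u \<Longrightarrow> a u \<le> a x" and "a x \<le> 1" and P_nonneg: "\<And>u. 0 \<le> P u"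
  shows "P x * (1 - real m * a x) \<le> P (x * 2 ^ m)"
proof -
  have "P x * (1 - a x) ^ m \<le> P (x * 2 ^ m)"
  proof (induction m)
    case (Suc m)
    have "x \<le> x * 2 ^ m" using mult_left_mono[of 1 "2 ^ m" x] \<open>0 \<le> x\<close> by simp
    have "P x * (1 - a x) ^ Suc m \<le> P (x * 2 ^ m) * (1 - a x)"
      unfolding power_Suc2 mult.assoc[symmetric]
      using Suc \<open>a x \<le> 1\<close> by (intro mult_right_mono) simp_all
    also have "\<dots> \<le> P (x * 2 ^ m) * (1 - a (x * 2 ^ m))"
      using a_mono[OF \<open>x \<le> x * 2 ^ m\<close>] P_nonneg by (simp add: mult_left_mono)
    also have "\<dots> \<le> P (x * 2 ^ Suc m)"
      using step[OF \<open>x \<le> x * 2 ^ m\<close>] by (simp only: power_Suc2 mult.assoc)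
    finally show ?case .
  qed simp
  moreover have "1 - real m * a x \<le> (1 - a x) ^ m"
    using Bernoulli_inequality[of "- a x" m] \<open>a x \<le> 1\<close> by simp
  ultimately show ?thesis using P_nonneg[of x] by (meson mult_left_mono order_trans)
qed

lemma eventually_dyadic_lower_bound:
  fixes P g :: "real \<Rightarrow> real"
  assumes quot: "((\<lambda>u. (P u / P (u * 2) - 1) / g u) \<longlongrightarrow> k) at_top"
    and g_lim: "(g \<longlongrightarrow> 0) at_top"
    and g_mono: "\<exists>u0. \<forall>x y. u0 \<le> x \<longrightarrow> x \<le> y \<longrightarrow> g y \<le> g x"
    and g_pos: "\<forall>\<^sub>F u in at_top. g u > 0" and P_pos: "\<And>u. P u > 0"
  shows "\<forall>\<^sub>F x in at_top. \<forall>m. P x * (1 - real m * ((\<bar>k\<bar> + 1) * g x)) \<le> P (x * 2 ^ m)"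
proof -
  define K where "K = \<bar>k\<bar> + 1"
  obtain u0 where u0: "\<And>x y. u0 \<le> x \<Longrightarrow> x \<le> y \<Longrightarrow> g y \<le> g x" using g_mono by blast
  have "\<forall>\<^sub>F x in at_top. \<forall>u\<ge>x. P u * (1 - K * g u) \<le> P (u * 2)"
    unfolding K_def by (rule eventually_all_ge_at_top[OF eventually_doubling_lower_bound[OF quot g_pos P_pos]])
  moreover have "\<forall>\<^sub>F x in at_top. K * g x < 1"
    using tendsto_mult_right_zero[OF g_lim, of K] by (rule order_tendstoD) simp
  moreover note eventually_ge_at_top[of "max u0 0"]
  ultimately show ?thesis
  proof eventually_elim
    case (elim x)
    have "K * g u \<le> K * g x" if "x \<le> u" for u
      using u0[OF _ that] elim by (intro mult_left_mono) (auto simp: K_def)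
    with elim P_pos show ?case
      unfolding K_def[symmetric]
      by (intro allI dyadic_lower_bound_of_doubling_step[where a = "\<lambda>u. K * g u"]) (auto intro: less_imp_le)
  qed
qed

lemma nn_integral_inverse_le_dyadic:
  fixes Y :: "'a \<Rightarrow> real"
  assumes "0 < x" "0 \<le> a" and [measurable]: "Y \<in> borel_measurable M"
    and gt: "AE \<omega> in M. x < Y \<omega>"
    and cdf: "\<And>n. emeasure M {\<omega>\<in>space M. Y \<omega> \<le> x * 2 ^ Suc n} \<le> ennreal (real (Suc n) * a)"
  shows "(\<integral>\<^sup>+\<omega>. ennreal (1 / Y \<omega>) \<partial>M) \<le> ennreal (4 * a / x)"
proof -
  define S where "S n = {\<omega>\<in>space M. Y \<omega> \<le> x * 2 ^ Suc n}" for n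
  have [measurable]: "S n \<in> sets M" for n unfolding S_def by measurable
  define h where "h n \<omega> = ennreal (1 / (x * 2 ^ n)) * indicator (S n) \<omega>" for n \<omega>
  have "ennreal (1 / Y \<omega>) \<le> (\<Sum>n. h n \<omega>)" if "\<omega> \<in> space M" "x < Y \<omega>" for \<omega>
  proof -
    obtain m where "Y \<omega> / x < 2 ^ m" using real_arch_pow[of 2 "Y \<omega> / x"] by auto
    then have "\<exists>m. Y \<omega> \<le> x * 2 ^ m" using \<open>0 < x\<close> by (auto simp: field_simps intro: less_imp_le)
    then obtain m where "Y \<omega> \<le> x * 2 ^ m" ..
    from ex_least_nat_less[of "\<lambda>m. Y \<omega> \<le> x * 2 ^ m", OF this] \<open>x < Y \<omega>\<close>
    obtain n where "Y \<omega> \<le> x * 2 ^ Suc n" "x * 2 ^ n < Y \<omega>" by auto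
    then have "\<omega> \<in> S n" "1 / Y \<omega> \<le> 1 / (x * 2 ^ n)"
      using that(1) \<open>0 < x\<close> by (auto simp: S_def intro!: frac_le)
    then have "ennreal (1 / Y \<omega>) \<le> h n \<omega>" by (simp add: h_def ennreal_leI)
    also have "\<dots> \<le> (\<Sum>n. h n \<omega>)"
      using sum_le_suminf[of "\<lambda>n. h n \<omega>" "{n}"] by (simp add: summableI)
    finally show ?thesis .
  qed
  then have "(\<integral>\<^sup>+\<omega>. ennreal (1 / Y \<omega>) \<partial>M) \<le> (\<integral>\<^sup>+\<omega>. (\<Sum>n. h n \<omega>) \<partial>M)"
    using gt by (intro nn_integral_mono_AE) (auto elim: AE_mp)
  also have "\<dots> = (\<Sum>n. ennreal (1 / (x * 2 ^ n)) * emeasure M (S n))"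
    unfolding h_def by (subst nn_integral_suminf, measurable) (simp add: nn_integral_cmult_indicator)
  also have "\<dots> \<le> (\<Sum>n. ennreal (a / x * (real (Suc n) * (1 / 2) ^ n)))"
  proof (intro suminf_le summableI)
    fix n
    have "ennreal (1 / (x * 2 ^ n)) * emeasure M (S n)
        \<le> ennreal (1 / (x * 2 ^ n)) * ennreal (real (Suc n) * a)"
      using cdf[of n] by (simp add: S_def mult_left_mono)
    also have "\<dots> = ennreal (1 / (x * 2 ^ n) * (real (Suc n) * a))"
      using \<open>0 < x\<close> \<open>0 \<le> a\<close> by (intro ennreal_mult[symmetric]) auto
    also have "1 / (x * 2 ^ n) * (real (Suc n) * a) = a / x * (real (Suc n) * (1 / 2) ^ n)"
      by (simp add: field_simps power_one_over)
    finally show "ennreal (1 / (x * 2 ^ n)) * emeasure M (S n)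
        \<le> ennreal (a / x * (real (Suc n) * (1 / 2) ^ n))" .
  qed
  also have "\<dots> = ennreal (a / x * 4)"
  proof (rule suminf_ennreal_eq)
    show "0 \<le> a / x * (real (Suc n) * (1 / 2) ^ n)" for n using \<open>0 < x\<close> \<open>0 \<le> a\<close> by simp
    have "(\<lambda>n. of_nat (Suc n) * (1 / 2 :: real) ^ n) sums (1 / (1 - 1 / 2) ^ 2)"
      by (rule geometric_deriv_sums) simp
    then have "(\<lambda>n. a / x * (real (Suc n) * (1 / 2) ^ n)) sums (a / x * (1 / (1 - 1 / 2) ^ 2))"
      by (rule sums_mult)
    then show "(\<lambda>n. a / x * (real (Suc n) * (1 / 2) ^ n)) sums (a / x * 4)"
      by (simp add: power2_eq_square)
  qed
  finally show ?thesis by (simp add: mult.commute)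
qed

definition first_exceed_value :: "(nat \<Rightarrow> 'a \<Rightarrow> real) \<Rightarrow> real \<Rightarrow> 'a \<Rightarrow> real" where
  "first_exceed_value \<sigma> x \<omega> = \<sigma> (first_exceed \<sigma> x \<omega>) \<omega>"

locale iid_real_seq = prob_space +
  fixes \<sigma> :: "nat \<Rightarrow> 'a \<Rightarrow> real"
  assumes measurable_seq[measurable]: "\<And>i. \<sigma> i \<in> borel_measurable M"
    and indep_seq: "indep_vars (\<lambda>_. borel) \<sigma> UNIV"
    and ident_seq: "\<And>i. distr M borel (\<sigma> i) = distr M borel (\<sigma> 0)"
begin

lemma prob_vimage_eq_prob_vimage_0:
  "B \<in> sets borel \<Longrightarrow> prob (\<sigma> i -` B \<inter> space M) = prob (\<sigma> 0 -` B \<inter> space M)"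
  by (metis ident_seq measure_distr measurable_seq)

lemma prob_below_until_in:
  assumes B: "B \<in> sets borel"
  shows "prob {\<omega>\<in>space M. (\<forall>j<i. \<sigma> j \<omega> \<le> x) \<and> \<sigma> i \<omega> \<in> B}
     = (1 - tail_prob M (\<sigma> 0) x) ^ i * prob (\<sigma> 0 -` B \<inter> space M)"
proof -
  define A where "A j = \<sigma> j -` (if j < i then {..x} else B) \<inter> space M" for j
  have "{\<omega>\<in>space M. (\<forall>j<i. \<sigma> j \<omega> \<le> x) \<and> \<sigma> i \<omega> \<in> B} = (\<Inter>j\<in>{..<Suc i}. A j)"
    by (auto simp: A_def lessThan_Suc)
  moreover have "prob (\<Inter>j\<in>{..<Suc i}. A j) = (\<Prod>j\<in>{..<Suc i}. prob (A j))"
    using indep_seq B unfolding indep_vars_def2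
    by (intro indep_setsD[of "\<lambda>i. {\<sigma> i -` A \<inter> space M | A. A \<in> sets borel}" UNIV])
       (auto simp: A_def intro: exI[of _ "{..x}"])
  moreover have "prob (A j) = 1 - tail_prob M (\<sigma> 0) x" if "j < i" for j
  proof -
    have "\<sigma> 0 -` {..x} \<inter> space M = space M - {\<omega> \<in> space M. \<sigma> 0 \<omega> > x}" by auto
    then show ?thesis
      using that prob_vimage_eq_prob_vimage_0[of "{..x}" j]
      by (simp add: A_def tail_prob_def prob_compl)
  qed
  moreover have "prob (A i) = prob (\<sigma> 0 -` B \<inter> space M)"
    using prob_vimage_eq_prob_vimage_0[OF B] by (simp add: A_def)
  ultimately show ?thesis by simp
qed

lemma AE_exists_exceed:
  assumes "tail_prob M (\<sigma> 0) x > 0"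
  shows "AE \<omega> in M. \<exists>i. \<sigma> i \<omega> > x"
proof -
  define N where "N = {\<omega>\<in>space M. \<forall>i. \<sigma> i \<omega> \<le> x}"
  have N_sets[measurable]: "N \<in> sets M" unfolding N_def by measurable
  have "prob N \<le> (1 - tail_prob M (\<sigma> 0) x) ^ n" for n
  proof -
    have "prob N \<le> prob {\<omega>\<in>space M. (\<forall>j<n. \<sigma> j \<omega> \<le> x) \<and> \<sigma> n \<omega> \<in> UNIV}"
      unfolding N_def by (intro finite_measure_mono) auto
    also have "\<dots> = (1 - tail_prob M (\<sigma> 0) x) ^ n"
      using prob_below_until_in[of UNIV n x] by (simp add: prob_space)
    finally show ?thesis .
  qed
  moreover have "(\<lambda>n. (1 - tail_prob M (\<sigma> 0) x) ^ n) \<longlonglongrightarrow> 0"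
    using assms by (intro LIMSEQ_power_zero) (auto simp: tail_prob_def)
  ultimately have "prob N \<le> 0" by (intro LIMSEQ_le_const) auto
  then have "N \<in> null_sets M" by (simp add: emeasure_eq_measure null_setsI measure_le_0_iff)
  then show ?thesis by (rule AE_I') (auto simp: N_def not_less)
qed

lemma first_exceed_value_gt:
  "\<exists>i. \<sigma> i \<omega> > x \<Longrightarrow> first_exceed_value \<sigma> x \<omega> > x"
  unfolding first_exceed_value_def first_exceed_def by (rule LeastI_ex)

lemma measurable_first_exceed_value[measurable]:
  "first_exceed_value \<sigma> x \<in> borel_measurable M"
  unfolding first_exceed_value_def first_exceed_def
  by (intro measurable_compose_countable[OF measurable_seq]) measurable

text \<open>A union bound over the index of the first exceedance; only the total mass
  \<open>\<Sum>i. (1 - p)\<^sup>i = 1 / p\<close> of the geometric law of that index enters.\<close>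
lemma first_exceed_value_le:
  assumes p: "tail_prob M (\<sigma> 0) x > 0" and "x \<le> y"
  shows "emeasure M {\<omega>\<in>space M. first_exceed_value \<sigma> x \<omega> \<le> y}
    \<le> ennreal ((tail_prob M (\<sigma> 0) x - tail_prob M (\<sigma> 0) y) / tail_prob M (\<sigma> 0) x)"
proof -
  let ?p = "tail_prob M (\<sigma> 0) x" and ?q = "tail_prob M (\<sigma> 0) y"
  define E where "E i = {\<omega>\<in>space M. (\<forall>j<i. \<sigma> j \<omega> \<le> x) \<and> \<sigma> i \<omega> \<in> {x<..y}}" for i
  have prob_E: "prob (E i) = (1 - ?p) ^ i * (?p - ?q)" for i
  proof -
    have "prob (\<sigma> 0 -` {x<..y} \<inter> space M)
        = prob ({\<omega> \<in> space M. \<sigma> 0 \<omega> > x} - {\<omega> \<in> space M. \<sigma> 0 \<omega> > y})"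
      using \<open>x \<le> y\<close> by (intro arg_cong[where f = prob]) auto
    also have "\<dots> = ?p - ?q"
      using \<open>x \<le> y\<close> by (subst finite_measure_Diff) (auto simp: tail_prob_def)
    finally have "prob (\<sigma> 0 -` {x<..y} \<inter> space M) = ?p - ?q" .
    then show ?thesis
      unfolding E_def prob_below_until_in[OF greaterThanAtMost_borel] by simp
  qed
  have "AE \<omega> in M. first_exceed_value \<sigma> x \<omega> \<le> y \<longrightarrow> \<omega> \<in> (\<Union>i. E i)"
    using AE_exists_exceed[OF p] AE_space
  proof eventually_elim
    case (elim \<omega>)
    show ?case
    proof
      assume "first_exceed_value \<sigma> x \<omega> \<le> y"
      moreover have "\<sigma> j \<omega> \<le> x" if "j < first_exceed \<sigma> x \<omega>" for j
        using not_less_Least[OF that[unfolded first_exceed_def]] by simp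
      ultimately show "\<omega> \<in> (\<Union>i. E i)"
        using first_exceed_value_gt[OF elim(1)] elim(2)
        by (auto simp: E_def first_exceed_value_def)
    qed
  qed
  then have "emeasure M {\<omega>\<in>space M. first_exceed_value \<sigma> x \<omega> \<le> y} \<le> emeasure M (\<Union>i. E i)"
    by (intro emeasure_mono_AE) (auto simp: E_def)
  also have "\<dots> \<le> (\<Sum>i. emeasure M (E i))"
    by (intro emeasure_subadditive_countably) (auto simp: E_def)
  also have "\<dots> = (\<Sum>i. ennreal ((1 - ?p) ^ i * (?p - ?q)))"
    by (simp add: emeasure_eq_measure prob_E)
  also have "\<dots> = ennreal ((?p - ?q) / ?p)"
  proof (rule suminf_ennreal_eq)
    have "?q \<le> ?p" "?p \<le> 1"
      using \<open>x \<le> y\<close> by (auto simp: tail_prob_def intro!: finite_measure_mono)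
    then show "0 \<le> (1 - ?p) ^ i * (?p - ?q)" for i by simp
    have "(\<lambda>i. (1 - ?p) ^ i) sums (1 / ?p)"
      using geometric_sums[of "1 - ?p"] p \<open>?p \<le> 1\<close> by simp
    then show "(\<lambda>i. (1 - ?p) ^ i * (?p - ?q)) sums ((?p - ?q) / ?p)"
      using sums_mult2 by fastforce
  qed
  finally show ?thesis .
qed

lemma nn_integral_inverse_first_exceed_value_le:
  assumes "0 < x" "0 \<le> a" and p: "tail_prob M (\<sigma> 0) x > 0"
    and lower: "\<And>m. tail_prob M (\<sigma> 0) x * (1 - real m * a) \<le> tail_prob M (\<sigma> 0) (x * 2 ^ m)"
  shows "(\<integral>\<^sup>+\<omega>. ennreal (1 / first_exceed_value \<sigma> x \<omega>) \<partial>M) \<le> ennreal (4 * a / x)"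
proof (rule nn_integral_inverse_le_dyadic[OF \<open>0 < x\<close> \<open>0 \<le> a\<close> measurable_first_exceed_value])
  show "AE \<omega> in M. x < first_exceed_value \<sigma> x \<omega>"
    using AE_exists_exceed[OF p] by (rule AE_mp) (simp add: first_exceed_value_gt)
  fix n
  let ?p = "tail_prob M (\<sigma> 0) x" and ?q = "tail_prob M (\<sigma> 0) (x * 2 ^ Suc n)"
  have "x \<le> x * 2 ^ Suc n" using mult_left_mono[OF one_le_power[of "2 :: real" "Suc n"], of x] \<open>0 < x\<close> by simp
  then have "emeasure M {\<omega>\<in>space M. first_exceed_value \<sigma> x \<omega> \<le> x * 2 ^ Suc n}
      \<le> ennreal ((?p - ?q) / ?p)"
    by (rule first_exceed_value_le[OF p])
  also have "(?p - ?q) / ?p \<le> real (Suc n) * a"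
    using lower[of "Suc n"] p by (simp add: divide_le_eq algebra_simps)
  finally show "emeasure M {\<omega>\<in>space M. first_exceed_value \<sigma> x \<omega> \<le> x * 2 ^ Suc n}
      \<le> ennreal (real (Suc n) * a)" by (simp add: ennreal_leI)
qed

end

theorem lemma3p3:
  fixes M :: "'a measure" and \<sigma> :: "nat \<Rightarrow> 'a \<Rightarrow> real"
    and g k :: "real \<Rightarrow> real"
  assumes prob: "prob_space M"
    and rv: "\<And>i. \<sigma> i \<in> borel_measurable M"
    and indep: "prob_space.indep_vars M (\<lambda>_. borel) \<sigma> UNIV"
    and ident: "\<And>i. distr M borel (\<sigma> i) = distr M borel (\<sigma> 0)"
    and pos: "AE \<omega> in M. \<sigma> 0 \<omega> > 0"
    and slow: "\<And>v. v > 0 \<Longrightarrow>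
                 ((\<lambda>u. tailL M (\<sigma> 0) (u * v) / tailL M (\<sigma> 0) u) \<longlongrightarrow> 1) at_top"
    and L_cont: "continuous_on UNIV (tailL M (\<sigma> 0))"
    and g_lim: "(g \<longlongrightarrow> 0) at_top"
    and g_mono: "\<exists>u0. \<forall>x y. u0 \<le> x \<longrightarrow> x \<le> y \<longrightarrow> g y \<le> g x"
    and k_lim: "\<And>v. v > 0 \<Longrightarrow>
                 ((\<lambda>u. (tailL M (\<sigma> 0) (u * v) / tailL M (\<sigma> 0) u - 1) / g u) \<longlongrightarrow> k v) at_top"
    and k_nontriv: "\<exists>v>0. k v \<noteq> 0 \<and> (\<forall>u>0. k (u * v) \<noteq> k u)"
  shows "\<exists>c>0. \<forall>\<^sub>F x in at_top.
           (\<integral>\<^sup>+ \<omega>. ennreal (1 / \<sigma> (first_exceed \<sigma> x \<omega>) \<omega>) \<partial>M) < ennreal (c * g x / x)"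
proof -
  interpret iid_real_seq M \<sigma>
    using prob rv indep ident by (intro iid_real_seq.intro iid_real_seq_axioms.intro)
  define P where "P = tail_prob M (\<sigma> 0)"
  define K where "K = \<bar>k 2\<bar> + 1"
  have P_pos: "P u > 0" for u
    unfolding P_def by (rule tail_prob_pos_of_tailL_ratio_tendsto[OF finite_measure rv slow[of 2]]) simp
  obtain v where "v > 0" "k v \<noteq> 0" using k_nontriv by blast
  have g_pos: "\<forall>\<^sub>F u in at_top. g u > 0"
    by (rule eventually_gt_0_of_quotient_tendsto[OF g_lim g_mono k_lim[OF \<open>v > 0\<close>] \<open>k v \<noteq> 0\<close>])
  have "((\<lambda>u. (P u / P (u * 2) - 1) / g u) \<longlongrightarrow> k 2) at_top"
    using k_lim[of 2] P_pos by (simp add: P_def tailL_eq_inverse_tail_prob)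
  from eventually_dyadic_lower_bound[OF this g_lim g_mono g_pos P_pos] g_pos eventually_gt_at_top[of 0]
  have "\<forall>\<^sub>F x in at_top.
      (\<integral>\<^sup>+ \<omega>. ennreal (1 / first_exceed_value \<sigma> x \<omega>) \<partial>M) < ennreal (5 * K * g x / x)"
  proof eventually_elim
    case (elim x)
    then have "0 < K * g x" by (simp add: K_def add_pos_nonneg)
    with elim P_pos have "(\<integral>\<^sup>+ \<omega>. ennreal (1 / first_exceed_value \<sigma> x \<omega>) \<partial>M) \<le> ennreal (4 * (K * g x) / x)"
      by (intro nn_integral_inverse_first_exceed_value_le) (auto simp: K_def P_def)
    also have "\<dots> < ennreal (5 * K * g x / x)"
      using elim \<open>0 < K * g x\<close> by (intro ennreal_lessI divide_strict_right_mono) (auto simp: mult.assoc)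
    finally show ?case .
  qed
  moreover have "5 * K > 0" by (simp add: K_def add_pos_nonneg)
  ultimately show ?thesis unfolding first_exceed_value_def by blast
qed

end
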